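(* Under the hypotheses of Lemma 3 (namely: $\mathscr{A}=\{A_1,\ldots,A_r\}$ an irreducible set of real $d\times d$ matrices, $\|\cdot\|$ a norm on $\mathbb{R}^d$, integers $p\ge d-1$, $n\ge1$, a number $\mu>1$, matrices $A_{i_1},\ldots,A_{i_n}\in\mathscr{A}$ and nonzero $x_*\in\mathbb{R}^d$ with $\|A_{i_n}\cdots A_{i_1}x_*\|\ge \mu\,\eta_p(\mathscr{A})\,\rho(\mathscr{A})^n\|x_*\|$, where $\eta_p(\mathscr{A})=\max\{1,\rho(\mathscr{A})^p\}/\chi_p(\mathscr{A})$), and with $\eta=\mu^{1/(n+p)}$, there exists a sequence $H_k\in\mathscr{A}_\infty$, $k=0,1,\ldots$, such that $\mathrm{len}(H_k)\to\infty$ as $k\to\infty$ and \[ \|H_k\|\ge\big(\eta\,\rho(\mathscr{A})\big)^{\mathrm{len}(H_k)},\qquad k=0,1,\ldots. \]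
   Context: Irreducible: the matrices in $\mathscr{A}$ have no common invariant subspace other than $\{0\}$ and $\mathbb{R}^d$. $\mathscr{A}^k$ is the set of products of $k$ matrices from $\mathscr{A}$, $\mathscr{A}^0=\{I\}$; matrices carry the induced operator norm, $\|\mathscr{A}^n\|=\max_{A\in\mathscr{A}^n}\|A\|$, and $\rho(\mathscr{A})=\limsup_{n\to\infty}\|\mathscr{A}^n\|^{1/n}$. $\mathscr{A}_\infty=\bigcup_{k\ge1}\mathscr{A}^k$, elements regarded as products of factors from $\mathscr{A}$ whose number of factors is the length $\mathrm{len}$. $\mathscr{A}_p=\bigcup_{k=0}^p\mathscr{A}^k$, $\mathscr{A}_p(x)=\{Ax:A\in\mathscr{A}_p\}$, $\mathbf{S}(t)$ the closed $\|\cdot\|$-ball of radius $t$ about $0$, and $\chi_p(\mathscr{A})=\inf_{\|x\|=1}\sup\{t\ge0:\mathbf{S}(t)\subseteq\mathrm{conv}(\mathscr{A}_p(x)\cup\mathscr{A}_p(-x))\}$ is the $p$-measure of irreducibility. *)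

theory Defs
  imports "HOL-Analysis.Analysis" "HOL-Library.Liminf_Limsup"
begin

text \<open>Vectors in R^d are real^'d, d x d matrices real^'d^'d (d = CARD('d)).
  An arbitrary norm N on R^d is given explicitly as a function.\<close>

definition is_norm :: "(real^'d \<Rightarrow> real) \<Rightarrow> bool" where
  "is_norm N \<longleftrightarrow> (\<forall>x. 0 \<le> N x) \<and> (\<forall>x. N x = 0 \<longleftrightarrow> x = 0) \<and>
     (\<forall>c x. N (c *\<^sub>R x) = \<bar>c\<bar> * N x) \<and> (\<forall>x y. N (x + y) \<le> N x + N y)"

definition opnorm :: "(real^'d \<Rightarrow> real) \<Rightarrow> real^'d^'d \<Rightarrow> real" where
  "opnorm N A = Sup {N (A *v x) | x. N x = 1}"

definition irreducible_set :: "(real^'d^'d) set \<Rightarrow> bool" where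
  "irreducible_set \<A> \<longleftrightarrow>
     (\<forall>V. subspace V \<and> (\<forall>A\<in>\<A>. \<forall>v\<in>V. A *v v \<in> V) \<longrightarrow> V = {0} \<or> V = UNIV)"

definition mprod :: "(real^'d^'d) list \<Rightarrow> real^'d^'d" where
  "mprod Bs = foldr (**) Bs (mat 1)"

definition prods :: "(real^'d^'d) set \<Rightarrow> nat \<Rightarrow> (real^'d^'d) set" where
  "prods \<A> k = {mprod Bs | Bs. length Bs = k \<and> set Bs \<subseteq> \<A>}"

definition prods_upto :: "(real^'d^'d) set \<Rightarrow> nat \<Rightarrow> (real^'d^'d) set" where
  "prods_upto \<A> p = (\<Union>k\<le>p. prods \<A> k)"

definition setnorm :: "(real^'d \<Rightarrow> real) \<Rightarrow> (real^'d^'d) set \<Rightarrow> nat \<Rightarrow> real" where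
  "setnorm N \<A> n = Max (opnorm N ` prods \<A> n)"

definition jsr :: "(real^'d \<Rightarrow> real) \<Rightarrow> (real^'d^'d) set \<Rightarrow> real" where
  "jsr N \<A> = real_of_ereal (limsup (\<lambda>n. ereal (setnorm N \<A> n powr (1 / real n))))"

definition chi :: "(real^'d \<Rightarrow> real) \<Rightarrow> (real^'d^'d) set \<Rightarrow> nat \<Rightarrow> real" where
  "chi N \<A> p = Inf ((\<lambda>x. Sup {t. 0 \<le> t \<and>
        {y. N y \<le> t} \<subseteq> convex hull ((\<lambda>A. A *v x) ` prods_upto \<A> p \<union>
                                       (\<lambda>A. A *v (- x)) ` prods_upto \<A> p)})
      ` {x. N x = 1})"

definition eta_p :: "(real^'d \<Rightarrow> real) \<Rightarrow> (real^'d^'d) set \<Rightarrow> nat \<Rightarrow> real" where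
  "eta_p N \<A> p = max 1 (jsr N \<A> ^ p) / chi N \<A> p"

end

theory Submission
  imports Defs
begin

text \<open>
  Let rho be the joint spectral radius, chi the p-measure of irreducibility,
  x a nonzero vector and y = A_{i_n} ... A_{i_1} x.  By definition of chi, the N-ball of radius
  chi lies in the convex hull of the vectors +-M v with M in A_p and v = y / N(y).  Rescaling,
  c x with c = chi N(y) / N(x) is a convex combination of vectors +-H x, where H ranges over
  products of between n and n + p factors.  Applying linear maps to such convex combinations
  and iterating, c^k x is a convex combination of vectors +-H x with k n <= len H <= k (n + p);
  since a norm is bounded on a convex hull by its values on the generators, some such H has
  operator norm at least c^k.  The hypothesis gives c >= mu max(1, rho^p) rho^n, and an
  elementary estimate turns this into a lower bound (mu^(1/(n+p)) rho)^(len H).  (If y = 0,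
  the hypothesis forces rho = 0 and any nonempty words will do.)
\<close>

section \<open>Abstract norms on R^d\<close>

lemma is_normD:
  assumes "is_norm N"
  shows "0 \<le> N x" "N x = 0 \<longleftrightarrow> x = 0" "N (c *\<^sub>R x) = \<bar>c\<bar> * N x" "N (x + y) \<le> N x + N y"
  using assms unfolding is_norm_def by auto

lemma is_norm_pos: "is_norm N \<Longrightarrow> x \<noteq> 0 \<Longrightarrow> 0 < N x"
  using is_normD(1,2) by (metis less_eq_real_def)

lemma is_norm_zero: "is_norm N \<Longrightarrow> N 0 = 0"
  using is_normD(2) by blast

lemma is_norm_uminus: "is_norm N \<Longrightarrow> N (- x) = N x"
  using is_normD(3)[of N "-1" x] by simp

lemma is_norm_diff: "is_norm N \<Longrightarrow> \<bar>N x - N y\<bar> \<le> N (x - y)"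
  using is_normD(4)[of N "x - y" y] is_normD(4)[of N "y - x" x] is_norm_uminus[of N "x - y"]
  by simp

lemma is_norm_sum: "is_norm N \<Longrightarrow> N (sum f S) \<le> (\<Sum>i\<in>S. N (f i))"
  by (induction S rule: infinite_finite_induct) (auto simp: is_norm_zero intro: order_trans[OF is_normD(4)])

lemma is_norm_le_euclidean:
  fixes N :: "real^'d \<Rightarrow> real"
  assumes "is_norm N"
  shows "\<exists>K>0. \<forall>x. N x \<le> K * norm x"
proof -
  define K where "K = (\<Sum>i\<in>UNIV. N (axis i (1::real))) + 1"
  have K0: "K > 0" unfolding K_def using is_normD(1)[OF assms] by (simp add: sum_nonneg add_nonneg_pos)
  have "N x \<le> K * norm x" for x
  proof -
    have "N x = N (\<Sum>i\<in>UNIV. (x $ i) *\<^sub>R axis i 1)"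
      using basis_expansion[of x] by (simp add: scalar_mult_eq_scaleR)
    also have "\<dots> \<le> (\<Sum>i\<in>UNIV. N ((x $ i) *\<^sub>R axis i 1))" by (rule is_norm_sum[OF assms])
    also have "\<dots> = (\<Sum>i\<in>UNIV. \<bar>x $ i\<bar> * N (axis i 1))" using is_normD(3)[OF assms] by simp
    also have "\<dots> \<le> (\<Sum>i\<in>UNIV. norm x * N (axis i 1))"
      by (rule sum_mono, rule mult_right_mono[OF component_le_norm_cart is_normD(1)[OF assms]])
    also have "\<dots> \<le> K * norm x" unfolding K_def by (simp add: sum_distrib_left algebra_simps)
    finally show ?thesis .
  qed
  thus ?thesis using K0 by blast
qed

lemma is_norm_continuous:
  fixes N :: "real^'d \<Rightarrow> real"
  assumes "is_norm N"
  shows "continuous_on S N"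
proof -
  obtain K where K: "K > 0" "\<And>x. N x \<le> K * norm x" using is_norm_le_euclidean[OF assms] by blast
  have "dist (N x') (N x) \<le> K * dist x' x" for x x'
    using is_norm_diff[OF assms, of x' x] K(2)[of "x' - x"] by (simp add: dist_real_def dist_norm)
  hence "lipschitz_on K S N" by (intro lipschitz_onI) (use K in auto)
  thus ?thesis by (rule lipschitz_on_continuous_on)
qed

lemma is_norm_ge_euclidean:
  fixes N :: "real^'d \<Rightarrow> real"
  assumes "is_norm N"
  shows "\<exists>k>0. \<forall>x. k * norm x \<le> N x"
proof -
  have "sphere (0::real^'d) 1 \<noteq> {}" by (metis mem_sphere_0 norm_axis_1 empty_iff)
  then obtain x0 where x0: "x0 \<in> sphere 0 1" "\<And>y. y \<in> sphere 0 1 \<Longrightarrow> N x0 \<le> N y"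
    using continuous_attains_inf[OF compact_sphere _ is_norm_continuous[OF assms]] by metis
  have "N x0 * norm x \<le> N x" for x
  proof (cases "x = 0")
    case False
    hence "N x0 \<le> N ((1 / norm x) *\<^sub>R x)" using x0(2) by simp
    also have "\<dots> = N x / norm x" using is_normD(3)[OF assms] by simp
    finally show ?thesis using False by (simp add: field_simps)
  qed (simp add: is_norm_zero[OF assms])
  moreover have "N x0 > 0" using x0(1) is_norm_pos[OF assms, of x0] by force
  ultimately show ?thesis by blast
qed

lemma is_norm_unit_exists:
  fixes N :: "real^'d \<Rightarrow> real"
  assumes "is_norm N" shows "\<exists>e. N e = 1"
proof -
  let ?a = "axis undefined 1 :: real^'d"
  have "N ?a > 0" using is_norm_pos[OF assms] by (simp add: axis_eq_0_iff)
  hence "N ((1 / N ?a) *\<^sub>R ?a) = 1" using is_normD(3)[OF assms] by simp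
  thus ?thesis by blast
qed

text \<open>The unit sphere of N is compact: closed by continuity, bounded by the lower estimate.\<close>
lemma is_norm_unit_sphere_compact:
  fixes N :: "real^'d \<Rightarrow> real"
  assumes "is_norm N"
  shows "compact {x. N x = 1}"
proof -
  obtain k where k: "k > 0" "\<And>x. k * norm x \<le> N x" using is_norm_ge_euclidean[OF assms] by blast
  have "closed {x. N x = 1}"
    by (intro closed_Collect_eq is_norm_continuous[OF assms] continuous_on_const)
  moreover have "bounded {x. N x = 1}" unfolding bounded_iff
  proof (intro exI[of _ "1 / k"] allI impI ballI)
    fix x assume "x \<in> {x. N x = 1}"
    thus "norm x \<le> 1 / k" using k(2)[of x] k(1) by (simp add: field_simps)
  qed
  ultimately show ?thesis by (simp add: compact_eq_bounded_closed)
qed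

lemma is_norm_convex_hull_bound:
  fixes N :: "real^'d \<Rightarrow> real"
  assumes N: "is_norm N" and z: "z \<in> convex hull S"
  shows "\<exists>s\<in>S. N z \<le> N s"
proof (rule ccontr)
  assume "\<not> ?thesis"
  hence sub: "S \<subseteq> {w. N w < N z}" by auto
  have "convex {w. N w < N z}" unfolding convex_def
  proof (intro ballI allI impI)
    fix x y :: "real^'d" and u v :: real
    assume x: "x \<in> {w. N w < N z}" and y: "y \<in> {w. N w < N z}" and uv: "0 \<le> u" "0 \<le> v" "u + v = 1"
    have "N (u *\<^sub>R x + v *\<^sub>R y) \<le> u * N x + v * N y"
      using is_normD(4)[OF N, of "u *\<^sub>R x" "v *\<^sub>R y"] is_normD(3)[OF N] uv by simp
    also have "\<dots> < u * N z + v * N z"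
    proof (cases "u = 0")
      case False
      hence "u * N x < u * N z" using x uv by (intro mult_strict_left_mono) auto
      moreover have "v * N y \<le> v * N z" using y uv by (intro mult_left_mono) auto
      ultimately show ?thesis by linarith
    qed (use y uv in simp)
    also have "\<dots> = N z" using uv(3) by (metis distrib_right mult_1)
    finally show "u *\<^sub>R x + v *\<^sub>R y \<in> {w. N w < N z}" by simp
  qed
  hence "convex hull S \<subseteq> {w. N w < N z}" using sub by (intro hull_minimal)
  thus False using z by auto
qed

section \<open>Products and the operator norm\<close>

lemma mprod_Nil[simp]: "mprod [] = mat 1"
  unfolding mprod_def by simp

lemma mprod_Cons[simp]: "mprod (A # Bs) = A ** mprod Bs"
  unfolding mprod_def by simp

lemma mprod_append: "mprod (xs @ ys) = mprod xs ** mprod ys"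
  by (induction xs) (auto simp: matrix_mul_assoc)

lemma prods_upto_iff:
  "M \<in> prods_upto \<A> p \<longleftrightarrow> (\<exists>Bs. length Bs \<le> p \<and> set Bs \<subseteq> \<A> \<and> M = mprod Bs)"
  unfolding prods_upto_def prods_def by auto

lemma finite_prods_upto: "finite \<A> \<Longrightarrow> finite (prods_upto \<A> p)"
proof -
  assume "finite \<A>"
  hence "finite (mprod ` {Bs. set Bs \<subseteq> \<A> \<and> length Bs \<le> p})"
    using finite_lists_length_le by blast
  moreover have "prods_upto \<A> p = mprod ` {Bs. set Bs \<subseteq> \<A> \<and> length Bs \<le> p}"
    using prods_upto_iff by blast
  ultimately show ?thesis by simp
qed

lemma one_in_prods_upto: "mat 1 \<in> prods_upto \<A> p"
  unfolding prods_upto_iff by (intro exI[of _ "[]"]) simp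

lemma prods_upto_mono: "k \<le> p \<Longrightarrow> prods_upto \<A> k \<subseteq> prods_upto \<A> p"
  unfolding prods_upto_def by (auto intro: le_trans)

lemma prods_upto_Suc: "A \<in> \<A> \<Longrightarrow> M \<in> prods_upto \<A> k \<Longrightarrow> A ** M \<in> prods_upto \<A> (Suc k)"
  unfolding prods_upto_iff by (metis Suc_le_mono insert_subset length_Cons list.simps(15) mprod_Cons)

lemma matrix_vector_mult_uminus_right: "(A::real^'n^'m) *v (- x) = - (A *v x)"
  using linear_neg[OF matrix_vector_mul_linear[of A]] by simp

lemma opnorm_bdd:
  fixes N :: "real^'d \<Rightarrow> real"
  assumes "is_norm N"
  shows "bdd_above {N (M *v x) | x. N x = 1}"
proof -
  obtain K where K: "K > 0" "\<And>x. N x \<le> K * norm x" using is_norm_le_euclidean[OF assms] by blast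
  obtain k where k: "k > 0" "\<And>x. k * norm x \<le> N x" using is_norm_ge_euclidean[OF assms] by blast
  obtain B where B: "B > 0" "\<And>x. norm (M *v x) \<le> norm x * B"
    using bounded_linear.pos_bounded[OF matrix_vector_mul_bounded_linear[of M]] by blast
  have "N (M *v x) \<le> K * B / k" if "N x = 1" for x
  proof -
    have "norm x \<le> 1 / k" using k(2)[of x] that k(1) by (simp add: field_simps)
    hence "norm x * B \<le> (1 / k) * B" using B(1) by (intro mult_right_mono) auto
    hence "norm (M *v x) \<le> B / k" using B(2)[of x] by simp
    hence "K * norm (M *v x) \<le> K * (B / k)" using K(1) by (intro mult_left_mono) auto
    thus ?thesis using K(2)[of "M *v x"] by simp
  qed
  thus ?thesis unfolding bdd_above_def by blast
qed

lemma opnorm_ge: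
  fixes N :: "real^'d \<Rightarrow> real"
  assumes "is_norm N" "x \<noteq> 0"
  shows "N (M *v x) / N x \<le> opnorm N M"
proof -
  have nx: "N x > 0" using is_norm_pos[OF assms] .
  define u where "u = (1 / N x) *\<^sub>R x"
  have "N u = 1" unfolding u_def using is_normD(3)[OF assms(1)] nx by simp
  hence "N (M *v u) \<le> opnorm N M"
    unfolding opnorm_def by (intro cSup_upper[OF _ opnorm_bdd[OF assms(1)]]) blast
  moreover have "N (M *v u) = N (M *v x) / N x"
    unfolding u_def using is_normD(3)[OF assms(1)] nx by (simp add: matrix_vector_mult_scaleR)
  ultimately show ?thesis by simp
qed

lemma opnorm_nonneg:
  fixes N :: "real^'d \<Rightarrow> real"
  assumes "is_norm N"
  shows "0 \<le> opnorm N M"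
proof -
  have "(axis undefined 1 :: real^'d) \<noteq> 0" by (simp add: axis_eq_0_iff)
  from opnorm_ge[OF assms this, of M] is_normD(1)[OF assms] show ?thesis
    by (meson divide_nonneg_nonneg order_trans)
qed

lemma jsr_nonneg: "0 \<le> jsr N \<A>"
  unfolding jsr_def by (intro real_of_ereal_pos le_Limsup) (auto simp: powr_ge_zero)


section \<open>Orbits of irreducible families span R^d\<close>

definition orbit :: "(real^'d^'d) set \<Rightarrow> nat \<Rightarrow> real^'d \<Rightarrow> (real^'d) set" where
  "orbit \<A> p x = (\<lambda>M. M *v x) ` prods_upto \<A> p"

lemma self_in_orbit: "x \<in> orbit \<A> p x"
  unfolding orbit_def using one_in_prods_upto by (metis image_eqI matrix_vector_mul_lid)

lemma orbit_mono: "k \<le> p \<Longrightarrow> orbit \<A> k x \<subseteq> orbit \<A> p x"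
  unfolding orbit_def using prods_upto_mono by blast

lemma finite_orbit: "finite \<A> \<Longrightarrow> finite (orbit \<A> p x)"
  unfolding orbit_def using finite_prods_upto by blast

text \<open>If the span of the orbit stops growing it is invariant under \<A>, hence everything.\<close>
lemma orbit_span_stable_imp_full:
  fixes \<A> :: "(real^'d^'d) set"
  assumes irr: "irreducible_set \<A>" and x0: "x \<noteq> 0"
    and eq: "span (orbit \<A> k x) = span (orbit \<A> (Suc k) x)"
  shows "span (orbit \<A> k x) = UNIV"
proof -
  let ?U = "span (orbit \<A> k x)"
  have "A *v v \<in> ?U" if A: "A \<in> \<A>" and v: "v \<in> ?U" for A v
  proof -
    have "(*v) A ` orbit \<A> k x \<subseteq> orbit \<A> (Suc k) x"
      unfolding orbit_def using prods_upto_Suc[OF A] by (auto simp: matrix_vector_mul_assoc)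
    hence "span ((*v) A ` orbit \<A> k x) \<subseteq> ?U" using eq span_mono by metis
    moreover have "A *v v \<in> span ((*v) A ` orbit \<A> k x)"
      using v by (simp add: span_linear_image matrix_vector_mul_linear)
    ultimately show ?thesis by blast
  qed
  hence "?U = {0} \<or> ?U = UNIV" using irr unfolding irreducible_set_def by (simp add: subspace_span)
  moreover have "x \<in> ?U" using self_in_orbit span_base by blast
  ultimately show ?thesis using x0 by blast
qed

lemma orbit_spans:
  fixes \<A> :: "(real^'d^'d) set"
  assumes irr: "irreducible_set \<A>" and x0: "x \<noteq> 0" and p: "p \<ge> CARD('d) - 1"
  shows "span (orbit \<A> p x) = UNIV"
proof -
  have growth: "span (orbit \<A> k x) = UNIV \<or> k + 1 \<le> dim (orbit \<A> k x)" for k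
  proof (induction k)
    case 0
    have "dim {x} \<le> dim (orbit \<A> 0 x)" using self_in_orbit by (intro dim_subset) auto
    thus ?case using x0 by (simp add: dim_singleton)
  next
    case (Suc k)
    have sub: "span (orbit \<A> k x) \<subseteq> span (orbit \<A> (Suc k) x)" by (intro span_mono orbit_mono) simp
    show ?case
    proof (cases "span (orbit \<A> k x) = UNIV")
      case True
      thus ?thesis using sub by auto
    next
      case False
      hence "span (orbit \<A> k x) \<noteq> span (orbit \<A> (Suc k) x)"
        using orbit_span_stable_imp_full[OF irr x0] by blast
      hence "dim (orbit \<A> k x) < dim (orbit \<A> (Suc k) x)" using sub by (intro dim_psubset) blast
      thus ?thesis using Suc.IH False by simp
    qed
  qed
  have "dim (orbit \<A> (CARD('d) - 1) x) \<le> CARD('d)" using dim_subset_UNIV_cart by blast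
  hence "span (orbit \<A> (CARD('d) - 1) x) = UNIV"
    using growth[of "CARD('d) - 1"] dim_eq_full by fastforce
  thus ?thesis using span_mono[OF orbit_mono[OF p]] by auto
qed

lemma orbit_not_orthogonal:
  fixes \<A> :: "(real^'d^'d) set"
  assumes irr: "irreducible_set \<A>" and p: "p \<ge> CARD('d) - 1" and "x \<noteq> 0" "a \<noteq> 0"
  shows "\<exists>M\<in>prods_upto \<A> p. a \<bullet> (M *v x) \<noteq> 0"
proof (rule ccontr)
  assume "\<not> ?thesis"
  hence "orthogonal a v" if "v \<in> orbit \<A> p x" for v
    using that unfolding orbit_def orthogonal_def by auto
  hence "orthogonal a a"
    using orthogonal_to_span orbit_spans[OF irr \<open>x \<noteq> 0\<close> p] by blast
  thus False using \<open>a \<noteq> 0\<close> by (simp add: orthogonal_def)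
qed


section \<open>Positivity of the p-measure of irreducibility\<close>

definition sym_orbit_hull :: "(real^'d^'d) set \<Rightarrow> nat \<Rightarrow> real^'d \<Rightarrow> (real^'d) set" where
  "sym_orbit_hull \<A> p x = convex hull (orbit \<A> p x \<union> orbit \<A> p (- x))"

definition ball_radii :: "(real^'d \<Rightarrow> real) \<Rightarrow> (real^'d^'d) set \<Rightarrow> nat \<Rightarrow> real^'d \<Rightarrow> real set" where
  "ball_radii N \<A> p x = {t. 0 \<le> t \<and> {y. N y \<le> t} \<subseteq> sym_orbit_hull \<A> p x}"

lemma chi_eq: "chi N \<A> p = Inf ((\<lambda>x. Sup (ball_radii N \<A> p x)) ` {x. N x = 1})"
  unfolding chi_def ball_radii_def sym_orbit_hull_def orbit_def ..

lemma compact_sym_orbit_hull: "finite \<A> \<Longrightarrow> compact (sym_orbit_hull \<A> p x)"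
  unfolding sym_orbit_hull_def by (intro finite_imp_compact_convex_hull) (simp add: finite_orbit)

lemma zero_in_ball_radii:
  assumes "is_norm N" shows "0 \<in> ball_radii N \<A> p x"
proof -
  have "x \<in> sym_orbit_hull \<A> p x" "- x \<in> sym_orbit_hull \<A> p x"
    unfolding sym_orbit_hull_def using self_in_orbit by (auto intro: hull_inc)
  hence "(1/2) *\<^sub>R x + (1/2) *\<^sub>R (- x) \<in> sym_orbit_hull \<A> p x"
    unfolding sym_orbit_hull_def by (intro convexD[OF convex_convex_hull]) auto
  moreover have "{y. N y \<le> 0} = {0}"
    using is_normD(1,2)[OF assms] by (auto simp: is_norm_zero[OF assms] intro: antisym)
  ultimately show ?thesis unfolding ball_radii_def by auto
qed

lemma ball_radii_bdd:
  fixes N :: "real^'d \<Rightarrow> real"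
  assumes N: "is_norm N" and fin: "finite \<A>"
  shows "bdd_above (ball_radii N \<A> p x)"
proof -
  obtain R where R: "\<And>z. z \<in> sym_orbit_hull \<A> p x \<Longrightarrow> norm z \<le> R"
    using compact_imp_bounded[OF compact_sym_orbit_hull[OF fin]] unfolding bounded_iff by blast
  obtain e where e: "N e = 1" using is_norm_unit_exists[OF N] by blast
  have e0: "e \<noteq> 0" using e is_norm_zero[OF N] by auto
  have "t \<le> R / norm e" if "t \<in> ball_radii N \<A> p x" for t
  proof -
    have t0: "0 \<le> t" and sub: "{y. N y \<le> t} \<subseteq> sym_orbit_hull \<A> p x"
      using that unfolding ball_radii_def by auto
    have "N (t *\<^sub>R e) = t" using is_normD(3)[OF N] e t0 by simp
    hence "t *\<^sub>R e \<in> sym_orbit_hull \<A> p x" using sub by auto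
    hence "norm (t *\<^sub>R e) \<le> R" by (rule R)
    thus ?thesis using e0 t0 by (simp add: field_simps)
  qed
  thus ?thesis unfolding bdd_above_def by blast
qed

lemma chi_le:
  assumes "is_norm N" "finite \<A>" "N v = 1"
  shows "chi N \<A> p \<le> Sup (ball_radii N \<A> p v)"
proof -
  have "0 \<le> Sup (ball_radii N \<A> p x)" for x
    using cSup_upper[OF zero_in_ball_radii ball_radii_bdd] assms(1,2) by blast
  thus ?thesis unfolding chi_eq using assms(3)
    by (intro cInf_lower) (auto simp: bdd_below_def intro!: exI[of _ 0])
qed

text \<open>The supremum of the radii is attained, because the hull is closed: every N-ball of radius
  at most chi is contained in the hull.\<close>
lemma ball_in_sym_orbit_hull:
  fixes N :: "real^'d \<Rightarrow> real"
  assumes N: "is_norm N" and fin: "finite \<A>"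
    and s: "0 < s" "s \<le> Sup (ball_radii N \<A> p v)" and y: "N y \<le> s"
  shows "y \<in> sym_orbit_hull \<A> p v"
proof -
  define \<theta> where "\<theta> k = 1 - inverse (real (Suc (Suc k)))" for k
  have \<theta>: "0 \<le> \<theta> k" "\<theta> k < 1" for k unfolding \<theta>_def by (auto simp: field_simps)
  have shrunk: "\<theta> k *\<^sub>R y \<in> sym_orbit_hull \<A> p v" for k
  proof -
    have "\<theta> k * s < 1 * s" using \<theta>[of k] s(1) by (intro mult_strict_right_mono) auto
    hence "\<theta> k * s < Sup (ball_radii N \<A> p v)" using s(2) by linarith
    then obtain t where t: "t \<in> ball_radii N \<A> p v" "\<theta> k * s < t"
      using less_cSup_iff[OF _ ball_radii_bdd[OF N fin]] zero_in_ball_radii[OF N] by blast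
    have "N (\<theta> k *\<^sub>R y) \<le> \<theta> k * s" using is_normD(3)[OF N] \<theta>[of k] y by (simp add: mult_left_mono)
    thus ?thesis using t unfolding ball_radii_def by auto
  qed
  have "(\<lambda>k. \<theta> k *\<^sub>R y) \<longlonglongrightarrow> (1 - 0) *\<^sub>R y"
    unfolding \<theta>_def by (intro tendsto_intros LIMSEQ_Suc[OF LIMSEQ_inverse_real_of_nat])
  thus ?thesis
    using closed_sequentially[OF compact_imp_closed[OF compact_sym_orbit_hull[OF fin]] shrunk] by simp
qed

lemma uniform_orbit_spread:
  fixes \<A> :: "(real^'d^'d) set" and N :: "real^'d \<Rightarrow> real"
  assumes fin: "finite \<A>" and irr: "irreducible_set \<A>" and N: "is_norm N"
    and p: "p \<ge> CARD('d) - 1"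
  shows "\<exists>r>0. \<forall>x a. N x = 1 \<longrightarrow> (\<exists>M\<in>prods_upto \<A> p. r * norm a \<le> \<bar>a \<bullet> (M *v x)\<bar>)"
proof -
  let ?Ap = "prods_upto \<A> p"
  have finAp: "finite ?Ap" by (rule finite_prods_upto[OF fin])
  have cardAp: "card ?Ap > 0" using finAp one_in_prods_upto card_gt_0_iff by blast
  define K where "K = sphere (0::real^'d) 1 \<times> {x. N x = 1}"
  define g where "g z = (\<Sum>M\<in>?Ap. \<bar>fst z \<bullet> (M *v snd z)\<bar>)" for z :: "(real^'d) \<times> (real^'d)"
  have "compact K" unfolding K_def by (intro compact_Times is_norm_unit_sphere_compact[OF N]) auto
  obtain e where "N e = 1" using is_norm_unit_exists[OF N] by blast
  hence "(axis undefined 1, e) \<in> K" unfolding K_def by simp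
  hence "K \<noteq> {}" by blast
  have "continuous_on K g" unfolding g_def
    by (intro continuous_intros bounded_linear.continuous_on[OF matrix_vector_mul_bounded_linear])
  then obtain z0 where z0: "z0 \<in> K" "\<And>z. z \<in> K \<Longrightarrow> g z0 \<le> g z"
    using continuous_attains_inf[OF \<open>compact K\<close> \<open>K \<noteq> {}\<close>] by blast
  have "snd z0 \<noteq> 0" "fst z0 \<noteq> 0"
    using z0(1) is_norm_zero[OF N] unfolding K_def by auto
  then obtain M0 where "M0 \<in> ?Ap" "fst z0 \<bullet> (M0 *v snd z0) \<noteq> 0"
    using orbit_not_orthogonal[OF irr p] by blast
  hence "g z0 > 0" unfolding g_def using finAp by (intro sum_pos2) auto
  define r where "r = g z0 / card ?Ap"
  have "\<exists>M\<in>?Ap. r * norm a \<le> \<bar>a \<bullet> (M *v x)\<bar>" if x: "N x = 1" for a x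
  proof (cases "a = 0")
    case False
    define u where "u = (1 / norm a) *\<^sub>R a"
    have "\<exists>M\<in>?Ap. r \<le> \<bar>u \<bullet> (M *v x)\<bar>"
    proof (rule ccontr)
      assume "\<not> ?thesis"
      hence "g (u, x) < of_nat (card ?Ap) * r" unfolding g_def
        by (intro sum_bounded_above_strict cardAp) auto
      moreover have "(u, x) \<in> K" unfolding K_def u_def using x False by simp
      moreover have "of_nat (card ?Ap) * r = g z0" unfolding r_def using cardAp by simp
      ultimately show False using z0(2) by fastforce
    qed
    then obtain M where M: "M \<in> ?Ap" "r \<le> \<bar>u \<bullet> (M *v x)\<bar>" by blast
    have "\<bar>u \<bullet> (M *v x)\<bar> * norm a = \<bar>a \<bullet> (M *v x)\<bar>" using False unfolding u_def by (simp add: abs_mult)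
    thus ?thesis using mult_right_mono[OF M(2) norm_ge_zero[of a]] M(1) by auto
  qed (use one_in_prods_upto in auto)
  moreover have "r > 0" unfolding r_def using \<open>g z0 > 0\<close> cardAp by simp
  ultimately show ?thesis by (intro exI[of _ r]) auto
qed

lemma euclidean_ball_in_sym_orbit_hull:
  fixes x :: "real^'d"
  assumes fin: "finite \<A>" and r: "\<And>a. \<exists>M\<in>prods_upto \<A> p. r * norm a \<le> \<bar>a \<bullet> (M *v x)\<bar>"
    and y: "norm y \<le> r"
  shows "y \<in> sym_orbit_hull \<A> p x"
proof (rule ccontr)
  assume "y \<notin> sym_orbit_hull \<A> p x"
  then obtain a b where ab: "a \<bullet> y < b" "\<And>z. z \<in> sym_orbit_hull \<A> p x \<Longrightarrow> b < a \<bullet> z"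
    using separating_hyperplane_closed_point[OF _ compact_imp_closed[OF compact_sym_orbit_hull[OF fin]]]
    unfolding sym_orbit_hull_def by blast
  obtain M where M: "M \<in> prods_upto \<A> p" "r * norm a \<le> \<bar>a \<bullet> (M *v x)\<bar>" using r by blast
  have "M *v x \<in> sym_orbit_hull \<A> p x" "- (M *v x) \<in> sym_orbit_hull \<A> p x"
    unfolding sym_orbit_hull_def orbit_def using M(1)
    by (auto intro!: hull_inc simp: matrix_vector_mult_uminus_right)
  hence "b < - \<bar>a \<bullet> (M *v x)\<bar>"
    using ab(2) by (cases "a \<bullet> (M *v x) \<le> 0") (fastforce simp: inner_minus_right)+
  hence "b < - (r * norm a)" using M(2) by linarith
  moreover have "\<bar>a \<bullet> y\<bar> \<le> norm a * r"
    using Cauchy_Schwarz_ineq2[of a y] y by (simp add: mult_left_mono order_trans)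
  ultimately show False using ab(1) by (simp add: mult.commute)
qed

theorem chi_pos:
  fixes \<A> :: "(real^'d^'d) set" and N :: "real^'d \<Rightarrow> real"
  assumes fin: "finite \<A>" and irr: "irreducible_set \<A>" and N: "is_norm N"
    and p: "p \<ge> CARD('d) - 1"
  shows "0 < chi N \<A> p"
proof -
  obtain r where r: "r > 0" "\<And>x a. N x = 1 \<Longrightarrow> \<exists>M\<in>prods_upto \<A> p. r * norm a \<le> \<bar>a \<bullet> (M *v x)\<bar>"
    using uniform_orbit_spread[OF fin irr N p] by blast
  obtain k where k: "k > 0" "\<And>x. k * norm x \<le> N x" using is_norm_ge_euclidean[OF N] by blast
  have "k * r \<in> ball_radii N \<A> p x" if x: "N x = 1" for x
  proof -
    have "norm y \<le> r" if "N y \<le> k * r" for y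
      using mult_le_cancel_left_pos[OF k(1), of "norm y" r] k(2)[of y] that by linarith
    thus ?thesis unfolding ball_radii_def
      using euclidean_ball_in_sym_orbit_hull[OF fin r(2)[OF x]] k(1) r(1) by auto
  qed
  hence "k * r \<le> chi N \<A> p" unfolding chi_eq
    using is_norm_unit_exists[OF N] cSup_upper[OF _ ball_radii_bdd[OF N fin]]
    by (intro cInf_greatest) auto
  moreover have "0 < k * r" using k(1) r(1) by simp
  ultimately show ?thesis by linarith
qed


section \<open>Signed orbits and their convex hulls\<close>

definition words :: "(real^'d^'d) set \<Rightarrow> nat \<Rightarrow> nat \<Rightarrow> (real^'d^'d) list set" where
  "words \<A> lo hi = {Hs. set Hs \<subseteq> \<A> \<and> lo \<le> length Hs \<and> length Hs \<le> hi}"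

definition signed_orbit :: "(real^'d^'d) set \<Rightarrow> nat \<Rightarrow> nat \<Rightarrow> real^'d \<Rightarrow> (real^'d) set" where
  "signed_orbit \<A> lo hi x = {\<sigma> *\<^sub>R (mprod Hs *v x) | \<sigma> Hs. \<sigma> \<in> {1, -1} \<and> Hs \<in> words \<A> lo hi}"

lemma signed_orbit_memI:
  "\<sigma> \<in> {1, -1} \<Longrightarrow> Hs \<in> words \<A> lo hi \<Longrightarrow> \<sigma> *\<^sub>R (mprod Hs *v x) \<in> signed_orbit \<A> lo hi x"
  unfolding signed_orbit_def by blast

lemma sym_orbit_generator:
  assumes "s \<in> orbit \<A> p v \<union> orbit \<A> p (- v)"
  obtains \<sigma> Bs where "\<sigma> \<in> {1, -1}" "Bs \<in> words \<A> 0 p" "s = \<sigma> *\<^sub>R (mprod Bs *v v)"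
proof -
  obtain M \<sigma> where M: "M \<in> prods_upto \<A> p" "\<sigma> \<in> {1, -1}" "s = \<sigma> *\<^sub>R (M *v v)"
  proof (cases "s \<in> orbit \<A> p v")
    case True
    then obtain M where "M \<in> prods_upto \<A> p" "s = M *v v" unfolding orbit_def by blast
    thus ?thesis using that[of M 1] by simp
  next
    case False
    then obtain M where "M \<in> prods_upto \<A> p" "s = M *v (- v)" using assms unfolding orbit_def by blast
    thus ?thesis using that[of M "-1"] by (simp add: matrix_vector_mult_uminus_right)
  qed
  then obtain Bs where "length Bs \<le> p" "set Bs \<subseteq> \<A>" "M = mprod Bs" unfolding prods_upto_iff by blast
  thus ?thesis using that[of \<sigma> Bs] M(2,3) unfolding words_def by simp
qed

lemma signed_orbit_compose:
  assumes Qs: "Qs \<in> words \<A> a b" and \<sigma>: "\<sigma> \<in> {1, -1}" and t: "t \<in> signed_orbit \<A> a' b' x"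
  shows "\<sigma> *\<^sub>R (mprod Qs *v t) \<in> signed_orbit \<A> (a + a') (b + b') x"
proof -
  obtain \<tau> Hs where H: "\<tau> \<in> {1, -1}" "Hs \<in> words \<A> a' b'" "t = \<tau> *\<^sub>R (mprod Hs *v x)"
    using t unfolding signed_orbit_def by blast
  have "\<sigma> *\<^sub>R (mprod Qs *v t) = (\<sigma> * \<tau>) *\<^sub>R (mprod (Qs @ Hs) *v x)"
    unfolding H(3) by (simp add: mprod_append matrix_vector_mult_scaleR matrix_vector_mul_assoc)
  moreover have "\<sigma> * \<tau> \<in> {1, -1}" using \<sigma> H(1) by auto
  moreover have "Qs @ Hs \<in> words \<A> (a + a') (b + b')" using Qs H(2) unfolding words_def by auto
  ultimately show ?thesis unfolding H(3) using signed_orbit_memI by metis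
qed

lemma linear_image_in_convex_hull:
  assumes "linear f" "z \<in> convex hull S" "\<And>s. s \<in> S \<Longrightarrow> f s \<in> convex hull T"
  shows "f z \<in> convex hull T"
proof -
  have "f z \<in> convex hull (f ` S)" by (rule in_convex_hull_linear_image[OF assms(1,2)])
  also have "\<dots> \<subseteq> convex hull T" using assms(3) by (intro hull_minimal) auto
  finally show ?thesis .
qed

lemma signed_orbit_power:
  assumes base: "c *\<^sub>R x \<in> convex hull signed_orbit \<A> lo hi x"
  shows "c ^ k *\<^sub>R x \<in> convex hull signed_orbit \<A> (k * lo) (k * hi) x"
proof (induction k)
  case 0
  have "1 *\<^sub>R (mprod [] *v x) \<in> signed_orbit \<A> 0 0 x" by (rule signed_orbit_memI) (auto simp: words_def)
  thus ?case by (auto intro: hull_inc)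
next
  case (Suc k)
  have "c ^ k *\<^sub>R (c *\<^sub>R x) \<in> convex hull signed_orbit \<A> (Suc k * lo) (Suc k * hi) x"
  proof (rule linear_image_in_convex_hull[OF linear_scale_self base])
    fix s assume "s \<in> signed_orbit \<A> lo hi x"
    then obtain \<sigma> Qs where Q: "\<sigma> \<in> {1, -1}" "Qs \<in> words \<A> lo hi" "s = \<sigma> *\<^sub>R (mprod Qs *v x)"
      unfolding signed_orbit_def by blast
    have lin: "linear (\<lambda>z. \<sigma> *\<^sub>R (mprod Qs *v z))"
      by (intro linear_compose_scale_right matrix_vector_mul_linear)
    have "\<sigma> *\<^sub>R (mprod Qs *v (c ^ k *\<^sub>R x)) \<in> convex hull signed_orbit \<A> (lo + k * lo) (hi + k * hi) x"
      by (rule linear_image_in_convex_hull[OF lin Suc.IH])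
         (auto intro: hull_inc signed_orbit_compose[OF Q(2,1)])
    thus "c ^ k *\<^sub>R s \<in> convex hull signed_orbit \<A> (Suc k * lo) (Suc k * hi) x"
      unfolding Q(3) by (simp add: matrix_vector_mult_scaleR mult.commute)
  qed
  thus ?case by (simp add: mult.commute)
qed

lemma signed_orbit_base:
  fixes N :: "real^'d \<Rightarrow> real"
  assumes N: "is_norm N" and fin: "finite \<A>" and chi: "0 < chi N \<A> p"
    and Ws: "set Ws \<subseteq> \<A>" and y0: "mprod Ws *v x \<noteq> 0" and x0: "x \<noteq> 0"
  shows "(chi N \<A> p * N (mprod Ws *v x) / N x) *\<^sub>R x
           \<in> convex hull signed_orbit \<A> (length Ws) (length Ws + p) x"
proof -
  define y where "y = mprod Ws *v x"
  have Ny: "N y > 0" and Nx: "N x > 0" using is_norm_pos[OF N] y0 x0 unfolding y_def by auto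
  define v where "v = (1 / N y) *\<^sub>R y"
  have "N v = 1" unfolding v_def using is_normD(3)[OF N] Ny by simp
  define w where "w = (chi N \<A> p / N x) *\<^sub>R x"
  have "N w = chi N \<A> p" unfolding w_def using is_normD(3)[OF N] Nx chi by simp
  hence w: "w \<in> sym_orbit_hull \<A> p v"
    using ball_in_sym_orbit_hull[OF N fin chi chi_le[OF N fin \<open>N v = 1\<close>]] by simp
  have y_word: "1 *\<^sub>R y \<in> signed_orbit \<A> (length Ws) (length Ws) x"
    unfolding y_def using Ws by (intro signed_orbit_memI) (auto simp: words_def)
  have "N y *\<^sub>R w \<in> convex hull signed_orbit \<A> (length Ws) (length Ws + p) x"
  proof (rule linear_image_in_convex_hull[OF linear_scale_self w[unfolded sym_orbit_hull_def]])
    fix s assume "s \<in> orbit \<A> p v \<union> orbit \<A> p (- v)"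
    then obtain \<sigma> Bs where B: "\<sigma> \<in> {1, -1}" "Bs \<in> words \<A> 0 p" "s = \<sigma> *\<^sub>R (mprod Bs *v v)"
      by (rule sym_orbit_generator)
    have "N y *\<^sub>R s = \<sigma> *\<^sub>R (mprod Bs *v (1 *\<^sub>R y))"
      unfolding B(3) v_def using Ny by (simp add: matrix_vector_mult_scaleR)
    also have "\<dots> \<in> signed_orbit \<A> (length Ws) (length Ws + p) x"
      using signed_orbit_compose[OF B(2,1) y_word] by (simp add: add.commute)
    finally show "N y *\<^sub>R s \<in> convex hull signed_orbit \<A> (length Ws) (length Ws + p) x"
      by (rule hull_inc)
  qed
  moreover have "N y *\<^sub>R w = (chi N \<A> p * N y / N x) *\<^sub>R x" unfolding w_def by simp
  ultimately show ?thesis unfolding y_def by simp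
qed

lemma signed_orbit_opnorm:
  fixes N :: "real^'d \<Rightarrow> real"
  assumes N: "is_norm N" and x0: "x \<noteq> 0" and c: "c *\<^sub>R x \<in> convex hull signed_orbit \<A> lo hi x"
  shows "\<exists>Hs\<in>words \<A> lo hi. c \<le> opnorm N (mprod Hs)"
proof -
  obtain s where s: "s \<in> signed_orbit \<A> lo hi x" "N (c *\<^sub>R x) \<le> N s"
    using is_norm_convex_hull_bound[OF N c] by blast
  then obtain \<sigma> Hs where H: "\<sigma> \<in> {1, -1}" "Hs \<in> words \<A> lo hi" "s = \<sigma> *\<^sub>R (mprod Hs *v x)"
    unfolding signed_orbit_def by blast
  have "N s = N (mprod Hs *v x)" using H(1,3) is_norm_uminus[OF N] by auto
  moreover have "c * N x \<le> N (c *\<^sub>R x)"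
    using is_normD(3)[OF N] is_normD(1)[OF N, of x] by (simp add: mult_right_mono)
  ultimately have "c * N x \<le> N (mprod Hs *v x)" using s(2) by linarith
  hence "c \<le> N (mprod Hs *v x) / N x" using is_norm_pos[OF N x0] by (simp add: field_simps)
  thus ?thesis using H(2) opnorm_ge[OF N x0] by (blast intro: order_trans)
qed

lemma words_with_geometric_norm_growth:
  fixes N :: "real^'d \<Rightarrow> real"
  assumes "is_norm N" "finite \<A>" "0 < chi N \<A> p"
    and "set Ws \<subseteq> \<A>" "mprod Ws *v x \<noteq> 0" "x \<noteq> 0"
  shows "\<exists>Hs\<in>words \<A> (j * length Ws) (j * (length Ws + p)).
           (chi N \<A> p * N (mprod Ws *v x) / N x) ^ j \<le> opnorm N (mprod Hs)"
  using signed_orbit_opnorm[OF assms(1,6) signed_orbit_power[OF signed_orbit_base[OF assms]]] .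


section \<open>From norm growth to the statement of Lemma 4\<close>

lemma growth_estimate:
  fixes \<mu> \<rho> c :: real
  assumes mu: "\<mu> > 1" and rho: "\<rho> \<ge> 0" and c: "c \<ge> \<mu> * max 1 (\<rho> ^ p) * \<rho> ^ n" and n: "n \<ge> 1"
    and L1: "j * n \<le> L" and L2: "L \<le> j * (n + p)"
  shows "(\<mu> powr (1 / real (n + p)) * \<rho>) ^ L \<le> c ^ j"
proof -
  define \<eta> where "\<eta> = \<mu> powr (1 / real (n + p))"
  define mx where "mx = max 1 (\<rho> ^ p)"
  have eta1: "1 \<le> \<eta>" unfolding \<eta>_def using mu by (intro ge_one_powr_ge_zero) auto
  have "\<eta> ^ (n + p) = \<mu>" unfolding \<eta>_def using mu n by (subst powr_power) (auto simp: powr_one)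
  have eta_part: "\<eta> ^ L \<le> \<mu> ^ j"
  proof -
    have "\<eta> ^ L \<le> \<eta> ^ (j * (n + p))" using eta1 L2 by (intro power_increasing)
    also have "\<dots> = \<mu> ^ j" using \<open>\<eta> ^ (n + p) = \<mu>\<close> by (metis power_mult mult.commute)
    finally show ?thesis .
  qed
  obtain e where e: "L = j * n + e" "e \<le> j * p" using L1 L2
    by (metis add_le_cancel_left add_mult_distrib2 le_Suc_ex)
  have "\<rho> ^ e \<le> mx ^ j"
  proof (cases "\<rho> \<ge> 1")
    case True
    have "\<rho> ^ e \<le> \<rho> ^ (j * p)" using True e(2) by (intro power_increasing)
    also have "\<dots> = (\<rho> ^ p) ^ j" by (metis power_mult mult.commute)
    also have "\<dots> \<le> mx ^ j" unfolding mx_def using rho by (intro power_mono) auto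
    finally show ?thesis .
  next
    case False
    hence "\<rho> ^ e \<le> 1" using rho by (intro power_le_one) auto
    also have "1 \<le> mx ^ j" unfolding mx_def by simp
    finally show ?thesis .
  qed
  hence rho_part: "\<rho> ^ L \<le> (mx * \<rho> ^ n) ^ j"
  proof -
    assume "\<rho> ^ e \<le> mx ^ j"
    hence "\<rho> ^ e * (\<rho> ^ n) ^ j \<le> mx ^ j * (\<rho> ^ n) ^ j" using rho by (intro mult_right_mono) auto
    moreover have "\<rho> ^ L = \<rho> ^ e * (\<rho> ^ n) ^ j" unfolding e(1) by (metis power_add power_mult mult.commute)
    ultimately show ?thesis by (simp add: power_mult_distrib)
  qed
  have "(\<eta> * \<rho>) ^ L = \<eta> ^ L * \<rho> ^ L" by (simp add: power_mult_distrib)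
  also have "\<dots> \<le> \<mu> ^ j * (mx * \<rho> ^ n) ^ j" using eta_part rho_part rho mu by (intro mult_mono) auto
  also have "\<dots> = (\<mu> * mx * \<rho> ^ n) ^ j" by (simp add: power_mult_distrib)
  also have "\<dots> \<le> c ^ j" using c rho mu unfolding mx_def by (intro power_mono) auto
  finally show ?thesis unfolding \<eta>_def .
qed

lemma long_words_with_large_norm:
  fixes N :: "real^'d \<Rightarrow> real"
  assumes mu: "\<mu> > 1" and rho: "\<rho> \<ge> 0" and n: "n \<ge> 1" and c: "c \<ge> \<mu> * max 1 (\<rho> ^ p) * \<rho> ^ n"
    and words: "\<And>j. 0 < j \<Longrightarrow> \<exists>Hs\<in>words \<A> (j * n) (j * (n + p)). c ^ j \<le> opnorm N (mprod Hs)"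
  shows "\<exists>H :: nat \<Rightarrow> (real^'d^'d) list.
           (\<forall>k. H k \<noteq> [] \<and> set (H k) \<subseteq> \<A>) \<and>
           filterlim (\<lambda>k. length (H k)) at_top sequentially \<and>
           (\<forall>k. opnorm N (mprod (H k)) \<ge> (\<mu> powr (1 / real (n + p)) * \<rho>) ^ length (H k))"
proof -
  have "\<exists>H. \<forall>k. H k \<in> words \<A> (Suc k * n) (Suc k * (n + p)) \<and> c ^ Suc k \<le> opnorm N (mprod (H k))"
    using words[OF zero_less_Suc] by (intro choice allI) blast
  then obtain H where H: "\<And>k. H k \<in> words \<A> (Suc k * n) (Suc k * (n + p))"
    "\<And>k. c ^ Suc k \<le> opnorm N (mprod (H k))"
    by blast
  have len: "k < length (H k)" for k
  proof -
    have "Suc k * 1 \<le> Suc k * n" using n by (intro mult_le_mono2)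
    thus ?thesis using H(1)[of k] unfolding words_def by simp
  qed
  have "filterlim (\<lambda>k. length (H k)) at_top sequentially"
    by (rule filterlim_at_top_mono[OF filterlim_ident]) (intro always_eventually allI less_imp_le len)
  moreover have "(\<mu> powr (1 / real (n + p)) * \<rho>) ^ length (H k) \<le> opnorm N (mprod (H k))" for k
    using H(1)[of k] unfolding words_def
    by (intro order_trans[OF growth_estimate[OF mu rho c n] H(2)]) auto
  moreover have "H k \<noteq> [] \<and> set (H k) \<subseteq> \<A>" for k
    using len[of k] H(1)[of k] unfolding words_def by auto
  ultimately show ?thesis by (intro exI[of _ H] conjI allI) simp_all
qed

theorem lemma4:
  fixes \<A> :: "(real^'d^'d) set" and N :: "real^'d \<Rightarrow> real"
    and p n :: nat and \<mu> :: real and As :: "(real^'d^'d) list" and xs :: "real^'d"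
  assumes "finite \<A>" and "irreducible_set \<A>" and "is_norm N"
    and "p \<ge> CARD('d) - 1" and "n \<ge> 1" and "\<mu> > 1"
    and "length As = n" and "set As \<subseteq> \<A>" and "xs \<noteq> 0"
    and "N (mprod (rev As) *v xs) \<ge> \<mu> * eta_p N \<A> p * jsr N \<A> ^ n * N xs"
  shows "\<exists>H :: nat \<Rightarrow> (real^'d^'d) list.
           (\<forall>k. H k \<noteq> [] \<and> set (H k) \<subseteq> \<A>) \<and>
           filterlim (\<lambda>k. length (H k)) at_top sequentially \<and>
           (\<forall>k. opnorm N (mprod (H k)) \<ge>
                 (\<mu> powr (1 / real (n + p)) * jsr N \<A>) ^ length (H k))"
proof -
  note N = assms(3)
  have chi: "0 < chi N \<A> p" using chi_pos[OF assms(1-4)] .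
  define y where "y = mprod (rev As) *v xs"
  define c where "c = chi N \<A> p * N y / N xs"
  have c: "\<mu> * max 1 (jsr N \<A> ^ p) * jsr N \<A> ^ n \<le> c"
    using assms(10) chi is_norm_pos[OF N assms(9)]
    unfolding c_def y_def eta_p_def by (simp add: field_simps)
  have "\<exists>Hs\<in>words \<A> (j * n) (j * (n + p)). c ^ j \<le> opnorm N (mprod Hs)" if "0 < j" for j
  proof (cases "y = 0")
    case True
    have "hd As \<in> \<A>" using assms(5,7,8) by (cases As) auto
    hence "replicate (j * n) (hd As) \<in> words \<A> (j * n) (j * (n + p))"
      by (simp add: words_def set_replicate_conv_if)
    moreover have "c ^ j = 0" using True \<open>0 < j\<close> unfolding c_def by (simp add: is_norm_zero[OF N])
    ultimately show ?thesis using opnorm_nonneg[OF N] by metis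
  next
    case False
    thus ?thesis using words_with_geometric_norm_growth[OF N assms(1) chi _ _ assms(9), of "rev As"]
      assms(7,8) unfolding c_def y_def by simp
  qed
  thus ?thesis using long_words_with_large_norm[OF assms(6) jsr_nonneg assms(5) c] by blast
qed

end
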